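(* Let $G$ be a finite group, $p$ an odd prime, and $A=\langle a\rangle$ a cyclic subgroup of $G$ of order $p^n$. Let $\eta\in\mathrm{Aut}(G)$. The following are equivalent: (1) there is a relative gamma function $\gamma:A\to\mathrm{Aut}(G)$ with $\gamma(a)=\eta$; (2) $A$ is $\eta$-invariant and the order of $\eta$ divides $p^n$. When these hold, such a $\gamma$ is unique.
   Context: Maps act on the right, written exponentially. For $A\le G$, a function $\gamma:A\to\mathrm{Aut}(G)$ is a relative gamma function on $A$ if $\gamma(g^{\gamma(h)}h)=\gamma(g)\gamma(h)$ for all $g,h\in A$ and $a^{\gamma(b)}\in A$ for all $a,b\in A$. *)

theory Defs
  imports "HOL-Algebra.Algebra"
begin

text \<open>Aut(G) is the library group AutoGroup G (carrier auto G, extensional bijections).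
  Its multiplication is composition with f \<otimes> g = f \<circ> g (g applied first).
  Since in the paper maps act on the right, the paper's product \<gamma>(g)\<gamma>(h)
  (first \<gamma>(g), then \<gamma>(h)) is \<gamma> h \<otimes> \<gamma> g in AutoGroup G, and g^{\<gamma>(h)} is \<gamma> h g.\<close>

definition relative_gamma ::
  "('a, 'b) monoid_scheme \<Rightarrow> 'a set \<Rightarrow> ('a \<Rightarrow> 'a \<Rightarrow> 'a) \<Rightarrow> bool" where
  "relative_gamma G A \<gamma> \<longleftrightarrow>
     (\<forall>g\<in>A. \<gamma> g \<in> auto G) \<and>
     (\<forall>g\<in>A. \<forall>h\<in>A. \<gamma> (\<gamma> h g \<otimes>\<^bsub>G\<^esub> h) = \<gamma> h \<otimes>\<^bsub>AutoGroup G\<^esub> \<gamma> g) \<and>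
     (\<forall>x\<in>A. \<forall>y\<in>A. \<gamma> y x \<in> A)"

end

theory Submission
  imports Defs "HOL-Number_Theory.Residues"
begin

(* A relative gamma function \<gamma> on A turns A into a group under x \<circ> y = x^{\<gamma>(y)} y.  In it the
   powers a^{\<circ>m} of a depend only on \<eta> = \<gamma>(a), and \<gamma>(a^{\<circ>m}) = \<eta>^m; hence \<eta>^{|A|} = \<gamma>(1) = 1,
   and \<gamma> is determined by \<eta> as soon as the a^{\<circ>m} exhaust A.
   Conversely, if \<eta>(a) = a^s and \<eta>^{p^n} = 1, then s^{p^n} \<equiv> 1 (mod p^n), so s \<equiv> 1 (mod p) by Fermat.
   Then a^{\<circ>m} = a^{1 + s + ... + s^{m-1}}, and for odd p the p-adic valuation of this geometric sum
   equals that of m.  So m \<mapsto> a^{\<circ>m} is a bijection from Z/p^n onto A, and \<gamma>(a^{\<circ>m}) := \<eta>^m is a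
   well-defined relative gamma function. *)

section \<open>Geometric sums modulo prime powers\<close>

definition geom_sum :: "nat \<Rightarrow> nat \<Rightarrow> nat" where
  "geom_sum s m = (\<Sum>k<m. s ^ k)"

lemma geom_sum_add: "geom_sum s (m + d) = geom_sum s m + s ^ m * geom_sum s d"
  by (induction d) (simp_all add: geom_sum_def power_add algebra_simps)

lemma geom_sum_Suc: "geom_sum s (Suc m) = s * geom_sum s m + 1"
  using geom_sum_add[of s 1 m] by (simp add: geom_sum_def)

lemma geom_sum_mult: "geom_sum s (m * q) = geom_sum s m * geom_sum (s ^ m) q"
proof (induction q)
  case 0
  then show ?case by (simp add: geom_sum_def)
next
  case (Suc q)
  have "geom_sum s (m * Suc q) = geom_sum s (m * q + m)"
    by (simp add: algebra_simps)
  also have "\<dots> = geom_sum s m * geom_sum (s ^ m) q + s ^ (m * q) * geom_sum s m"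
    using Suc geom_sum_add by simp
  also have "\<dots> = geom_sum s m * geom_sum (s ^ m) (Suc q)"
    by (simp add: geom_sum_def power_mult algebra_simps)
  finally show ?case .
qed

lemma geom_sum_cong_one:
  assumes "[t = 1] (mod p)"
  shows "[geom_sum t q = q] (mod p)"
proof -
  have "[geom_sum t q = (\<Sum>k<q. 1)] (mod p)"
    unfolding geom_sum_def using assms by (intro cong_sum) (metis cong_pow power_one)
  then show ?thesis by simp
qed

lemma one_plus_mult_power_cong: "[(1 + p * u) ^ k = 1 + k * p * u] (mod p\<^sup>2)"
  for p u k :: nat
proof (induction k)
  case 0
  then show ?case by simp
next
  case (Suc k)
  have "[(1 + p * u) ^ Suc k = (1 + k * p * u) * (1 + p * u)] (mod p\<^sup>2)"
    using cong_scalar_right[OF Suc.IH, of "1 + p * u"] by (simp only: power_Suc2)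
  also have "(1 + k * p * u) * (1 + p * u) = 1 + Suc k * p * u + p\<^sup>2 * (k * u * u)"
    by (simp add: algebra_simps power2_eq_square)
  also have "[\<dots> = 1 + Suc k * p * u] (mod p\<^sup>2)"
    by (simp add: cong_def)
  finally show ?case .
qed

lemma geom_sum_one_plus_mult_cong:
  fixes p u :: nat
  assumes "odd p"
  shows "[geom_sum (1 + p * u) p = p] (mod p\<^sup>2)"
proof -
  obtain w where w: "p = 2 * w + 1" using assms oddE by blast
  have "(\<Sum>k<p. k) = p * w"
    using gauss_sum_nat[of "2 * w"] w by (simp add: lessThan_Suc_atMost atLeast0AtMost)
  moreover have "(\<Sum>k<p. 1 + k * p * u) = p + (\<Sum>k<p. k) * (p * u)"
    by (subst sum.distrib) (simp add: sum_distrib_right mult.assoc)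
  ultimately have "(\<Sum>k<p. 1 + k * p * u) = p + p\<^sup>2 * (u * w)"
    by (simp add: power2_eq_square algebra_simps)
  moreover have "[geom_sum (1 + p * u) p = (\<Sum>k<p. 1 + k * p * u)] (mod p\<^sup>2)"
    unfolding geom_sum_def by (intro cong_sum one_plus_mult_power_cong)
  ultimately show ?thesis
    by (simp add: cong_def)
qed

lemma geom_sum_prime:
  assumes p: "Factorial_Ring.prime p" "odd p" and t: "[t = 1] (mod p)"
  shows "\<exists>c. geom_sum t p = p * c \<and> \<not> p dvd c"
proof -
  have p1: "p > 1" using p(1) prime_gt_1_nat by blast
  have "t = t div p * p + 1"
    using t p1 div_mult_mod_eq[of t p] by (simp add: cong_def)
  then have "geom_sum t p mod p\<^sup>2 = p"
    using geom_sum_one_plus_mult_cong[OF p(2), of "t div p"] p1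
    by (simp add: cong_def power2_eq_square algebra_simps)
  then have "geom_sum t p = geom_sum t p div p\<^sup>2 * p\<^sup>2 + p"
    using div_mult_mod_eq[of "geom_sum t p" "p\<^sup>2"] by simp
  then have "geom_sum t p = p * (p * (geom_sum t p div p\<^sup>2) + 1)"
    by (simp add: power2_eq_square algebra_simps)
  moreover have "\<not> p dvd p * q + 1" for q
  proof
    assume "p dvd p * q + 1"
    then have "p dvd 1" by (metis dvd_add_right_iff dvd_triv_left)
    with p1 show False by simp
  qed
  ultimately show ?thesis by blast
qed

lemma geom_sum_prime_power:
  assumes p: "Factorial_Ring.prime p" "odd p" and s: "[s = 1] (mod p)"
  shows "\<exists>c. geom_sum s (p ^ k) = p ^ k * c \<and> \<not> p dvd c"
proof (induction k)
  case 0
  then show ?case using p(1) by (auto simp: geom_sum_def)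
next
  case (Suc k)
  then obtain c where c: "geom_sum s (p ^ k) = p ^ k * c" "\<not> p dvd c" by blast
  have "[s ^ p ^ k = 1] (mod p)" using cong_pow[OF s] by simp
  then obtain c' where c': "geom_sum (s ^ p ^ k) p = p * c'" "\<not> p dvd c'"
    using geom_sum_prime[OF p] by blast
  have "geom_sum s (p ^ Suc k) = geom_sum s (p ^ k * p)"
    by (simp add: mult.commute)
  also have "\<dots> = p ^ Suc k * (c * c')"
    using geom_sum_mult[of s "p ^ k" p] c c' by (simp add: ac_simps)
  finally have "geom_sum s (p ^ Suc k) = p ^ Suc k * (c * c')" .
  moreover have "\<not> p dvd c * c'" using c(2) c'(2) p(1) prime_dvd_mult_iff by blast
  ultimately show ?case by blast
qed

lemma prime_power_dvd_geom_sum_imp_dvd: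
  assumes p: "Factorial_Ring.prime p" "odd p" and s: "[s = 1] (mod p)" and "p ^ k dvd geom_sum s m"
  shows "p ^ k dvd m"
  using assms(4)
proof (induction k)
  case 0
  then show ?case by simp
next
  case (Suc k)
  then have "p ^ k dvd m" by (metis dvd_mult_left power_Suc2)
  then obtain q where q: "m = p ^ k * q" by blast
  obtain c where c: "geom_sum s (p ^ k) = p ^ k * c" "\<not> p dvd c"
    using geom_sum_prime_power[OF p s] by blast
  have "p ^ k * p dvd p ^ k * (c * geom_sum (s ^ p ^ k) q)"
    using Suc.prems q geom_sum_mult[of s "p ^ k" q] c(1) by (simp add: mult.commute mult.assoc)
  then have "p dvd c * geom_sum (s ^ p ^ k) q"
    using p(1) by (simp add: prime_gt_0_nat)
  then have "p dvd geom_sum (s ^ p ^ k) q" using c(2) p(1) prime_dvd_mult_iff by blast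
  moreover have "[geom_sum (s ^ p ^ k) q = q] (mod p)"
    using geom_sum_cong_one cong_pow[OF s] by simp
  ultimately have "p dvd q" using cong_dvd_iff by blast
  then show ?case using q by simp
qed

lemma geom_sum_cong_imp_cong:
  assumes p: "Factorial_Ring.prime p" "odd p" and s: "[s = 1] (mod p)"
    and eq: "[geom_sum s i = geom_sum s j] (mod p ^ k)"
  shows "[i = j] (mod p ^ k)"
proof -
  have "\<not> p dvd s"
    using cong_dvd_iff[OF s] p(1) by (metis One_nat_def nat_dvd_1_iff_1 not_prime_1)
  then have coprime: "coprime (p ^ k) (s ^ i)" for i
    using p(1) prime_imp_coprime coprime_power_left_iff coprime_power_right_iff by blast
  have ordered: "[i = j] (mod p ^ k)"
    if "[geom_sum s i = geom_sum s j] (mod p ^ k)" and "i \<le> j" for i j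
  proof -
    obtain d where j: "j = i + d" using \<open>i \<le> j\<close> le_Suc_ex by blast
    have "[geom_sum s i + s ^ i * geom_sum s d = geom_sum s i + 0] (mod p ^ k)"
      using that(1) j geom_sum_add by (simp add: cong_sym)
    then have "p ^ k dvd s ^ i * geom_sum s d"
      by (simp only: cong_add_lcancel_nat cong_0_iff)
    then have "p ^ k dvd d"
      using coprime coprime_dvd_mult_right_iff prime_power_dvd_geom_sum_imp_dvd[OF p s] by blast
    then show ?thesis using j by (metis cong_0_iff cong_add_lcancel_0_nat cong_sym)
  qed
  show ?thesis
  proof (cases "i \<le> j")
    case True
    then show ?thesis using ordered eq by blast
  next
    case False
    then show ?thesis using ordered[OF cong_sym[OF eq]] by (simp add: cong_sym)
  qed
qed

lemma fermat_little_prime_power: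
  fixes y p :: nat
  assumes p: "Factorial_Ring.prime p"
  shows "[y ^ p ^ k = y] (mod p)"
proof (induction k)
  case 0
  then show ?case by simp
next
  case (Suc k)
  have fermat: "[x ^ p = x] (mod p)" for x :: nat
  proof (cases "p dvd x")
    case True
    moreover have "p dvd x ^ p" using True p by (meson dvd_power dvd_trans prime_gt_0_nat)
    ultimately show ?thesis by (simp add: cong_def)
  next
    case False
    then have "[x * x ^ (p - 1) = x * 1] (mod p)"
      using fermat_theorem[OF p] cong_scalar_left by blast
    then show ?thesis using p by (simp flip: power_Suc add: prime_gt_0_nat)
  qed
  have "y ^ p ^ Suc k = (y ^ p ^ k) ^ p" by (simp flip: power_mult add: mult.commute)
  then show ?case using fermat Suc.IH cong_trans by metis
qed

section \<open>Relative gamma functions\<close>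

lemma relative_gammaD:
  assumes "relative_gamma G A \<gamma>"
  shows relative_gamma_auto: "g \<in> A \<Longrightarrow> \<gamma> g \<in> auto G"
    and relative_gamma_mult:
      "g \<in> A \<Longrightarrow> h \<in> A \<Longrightarrow> \<gamma> (\<gamma> h g \<otimes>\<^bsub>G\<^esub> h) = \<gamma> h \<otimes>\<^bsub>AutoGroup G\<^esub> \<gamma> g"
    and relative_gamma_closed: "x \<in> A \<Longrightarrow> y \<in> A \<Longrightarrow> \<gamma> y x \<in> A"
  using assms unfolding relative_gamma_def by blast+

(* The power a^{\<circ>m}, computed from \<eta> = \<gamma>(a) alone. *)
primrec circ_power :: "('a, 'b) monoid_scheme \<Rightarrow> ('a \<Rightarrow> 'a) \<Rightarrow> 'a \<Rightarrow> nat \<Rightarrow> 'a" where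
  "circ_power G \<eta> a 0 = \<one>\<^bsub>G\<^esub>"
| "circ_power G \<eta> a (Suc m) = \<eta> (circ_power G \<eta> a m) \<otimes>\<^bsub>G\<^esub> a"

definition circle_group :: "('a, 'b) monoid_scheme \<Rightarrow> 'a set \<Rightarrow> ('a \<Rightarrow> 'a \<Rightarrow> 'a) \<Rightarrow> 'a monoid" where
  "circle_group G A \<gamma> = \<lparr>carrier = A, monoid.mult = (\<lambda>x y. \<gamma> y x \<otimes>\<^bsub>G\<^esub> y), one = \<one>\<^bsub>G\<^esub>\<rparr>"

lemma circle_group_nat_pow: "x [^]\<^bsub>circle_group G A \<gamma>\<^esub> m = circ_power G (\<gamma> x) x m"
  by (induction m) (simp_all add: circle_group_def)

context group
begin

lemma carrier_AutoGroup: "carrier (AutoGroup G) = auto G"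
  by (simp add: AutoGroup_def)

lemma AutoGroup_mult_apply:
  "f \<in> auto G \<Longrightarrow> g \<in> auto G \<Longrightarrow> x \<in> carrier G \<Longrightarrow> (f \<otimes>\<^bsub>AutoGroup G\<^esub> g) x = f (g x)"
  by (simp add: AutoGroup_def BijGroup_def auto_def compose_def)

lemma AutoGroup_one_apply: "x \<in> carrier G \<Longrightarrow> \<one>\<^bsub>AutoGroup G\<^esub> x = x"
  by (simp add: AutoGroup_def BijGroup_def)

lemma AutoGroup_nat_pow_Suc_apply:
  assumes "f \<in> auto G" and "x \<in> carrier G"
  shows "(f [^]\<^bsub>AutoGroup G\<^esub> Suc j) x = f ((f [^]\<^bsub>AutoGroup G\<^esub> j) x)"
proof -
  interpret Aut: group "AutoGroup G" by (rule AutoGroup)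
  have "f [^]\<^bsub>AutoGroup G\<^esub> j \<in> auto G"
    using Aut.nat_pow_closed assms(1) carrier_AutoGroup by auto
  then show ?thesis
    using Aut.nat_pow_Suc2 assms AutoGroup_mult_apply carrier_AutoGroup by simp
qed

lemma auto_closed: "f \<in> auto G \<Longrightarrow> x \<in> carrier G \<Longrightarrow> f x \<in> carrier G"
  by (auto simp: auto_def hom_def)

lemma auto_mult:
  "f \<in> auto G \<Longrightarrow> x \<in> carrier G \<Longrightarrow> y \<in> carrier G \<Longrightarrow> f (x \<otimes> y) = f x \<otimes> f y"
  by (auto simp: auto_def hom_def)

lemma auto_one: "f \<in> auto G \<Longrightarrow> f \<one> = \<one>"
  by (simp add: auto_def hom_one is_group)

lemma auto_nat_pow: "f \<in> auto G \<Longrightarrow> x \<in> carrier G \<Longrightarrow> f (x [^] (k::nat)) = f x [^] k"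
  by (simp add: auto_def hom_nat_pow is_group)

lemma auto_inj_on: "f \<in> auto G \<Longrightarrow> inj_on f (carrier G)"
  by (auto simp: auto_def Bij_def bij_betw_def)

lemma AutoGroup_nat_pow_closed:
  assumes "f \<in> auto G" "f ` A \<subseteq> A" "A \<subseteq> carrier G" "x \<in> A"
  shows "(f [^]\<^bsub>AutoGroup G\<^esub> (j::nat)) x \<in> A"
proof (induction j)
  case 0
  then show ?case using assms by (auto simp: AutoGroup_one_apply)
next
  case (Suc j)
  have "(f [^]\<^bsub>AutoGroup G\<^esub> Suc j) x = f ((f [^]\<^bsub>AutoGroup G\<^esub> j) x)"
    by (rule AutoGroup_nat_pow_Suc_apply) (use assms in auto)
  then show ?case using Suc assms by auto
qed

lemma nat_pow_eq_iff_cong: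
  assumes "x \<in> carrier G"
  shows "x [^] (i::nat) = x [^] (j::nat) \<longleftrightarrow> [i = j] (mod ord x)"
proof -
  have "x [^] i = x [^] j \<longleftrightarrow> int (ord x) dvd int j - int i"
    using int_pow_eq[OF assms, of "int i" "int j"] by (simp add: int_pow_int)
  also have "\<dots> \<longleftrightarrow> [i = j] (mod ord x)"
    by (simp add: cong_iff_dvd_diff dvd_diff_commute flip: cong_int_iff)
  finally show ?thesis .
qed


lemma relative_gamma_one:
  assumes rg: "relative_gamma G A \<gamma>" and A: "subgroup A G"
  shows "\<gamma> \<one> = \<one>\<^bsub>AutoGroup G\<^esub>"
proof -
  interpret Aut: group "AutoGroup G" by (rule AutoGroup)
  have one: "\<one> \<in> A" using subgroup.one_closed[OF A] .
  then have aut: "\<gamma> \<one> \<in> carrier (AutoGroup G)"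
    using relative_gamma_auto[OF rg] carrier_AutoGroup by simp
  have "\<gamma> \<one> \<otimes>\<^bsub>AutoGroup G\<^esub> \<gamma> \<one> = \<gamma> \<one>"
    using relative_gamma_mult[OF rg one one] auto_one[OF relative_gamma_auto[OF rg one]] by simp
  then show ?thesis using Aut.l_cancel_one[OF aut aut] by simp
qed

lemma relative_gamma_mult_apply:
  assumes rg: "relative_gamma G A \<gamma>" and A: "subgroup A G"
    and "g \<in> A" "h \<in> A" "x \<in> carrier G"
  shows "\<gamma> (\<gamma> h g \<otimes> h) x = \<gamma> h (\<gamma> g x)"
  using assms relative_gamma_mult[OF rg] relative_gamma_auto[OF rg] AutoGroup_mult_apply by simp

lemma relative_gamma_image:
  assumes rg: "relative_gamma G A \<gamma>" and A: "subgroup A G" "finite A" and g: "g \<in> A"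
  shows "\<gamma> g ` A = A"
proof (rule endo_inj_surj[OF \<open>finite A\<close>])
  show "\<gamma> g ` A \<subseteq> A" using relative_gamma_closed[OF rg _ g] by blast
  show "inj_on (\<gamma> g) A"
    using auto_inj_on[OF relative_gamma_auto[OF rg g]] subgroup.subset[OF A(1)] inj_on_subset
    by blast
qed

lemma group_circle_group:
  assumes rg: "relative_gamma G A \<gamma>" and A: "subgroup A G" "finite A"
  shows "group (circle_group G A \<gamma>)"
proof (rule groupI)
  have AG: "x \<in> A \<Longrightarrow> x \<in> carrier G" for x using subgroup.subset[OF A(1)] by blast
  note auto = relative_gamma_auto[OF rg]
  fix x y z
  assume "x \<in> carrier (circle_group G A \<gamma>)" "y \<in> carrier (circle_group G A \<gamma>)"
    "z \<in> carrier (circle_group G A \<gamma>)"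
  then have x: "x \<in> A" and y: "y \<in> A" and z: "z \<in> A" by (simp_all add: circle_group_def)
  have yx: "\<gamma> y x \<in> carrier G" and zy: "\<gamma> z y \<in> carrier G" and zyx: "\<gamma> z (\<gamma> y x) \<in> carrier G"
    using auto_closed auto x y z AG by blast+
  have "\<gamma> z (\<gamma> y x \<otimes> y) \<otimes> z = \<gamma> z (\<gamma> y x) \<otimes> \<gamma> z y \<otimes> z"
    using auto_mult[OF auto[OF z] yx AG[OF y]] by simp
  also have "\<dots> = \<gamma> z (\<gamma> y x) \<otimes> (\<gamma> z y \<otimes> z)"
    using m_assoc[OF zyx zy AG[OF z]] .
  also have "\<dots> = \<gamma> (\<gamma> z y \<otimes> z) x \<otimes> (\<gamma> z y \<otimes> z)"
    using relative_gamma_mult_apply[OF rg A(1) y z] x AG by simp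
  finally show "x \<otimes>\<^bsub>circle_group G A \<gamma>\<^esub> y \<otimes>\<^bsub>circle_group G A \<gamma>\<^esub> z =
      x \<otimes>\<^bsub>circle_group G A \<gamma>\<^esub> (y \<otimes>\<^bsub>circle_group G A \<gamma>\<^esub> z)"
    by (simp add: circle_group_def)
next
  fix x y
  assume "x \<in> carrier (circle_group G A \<gamma>)" "y \<in> carrier (circle_group G A \<gamma>)"
  then show "x \<otimes>\<^bsub>circle_group G A \<gamma>\<^esub> y \<in> carrier (circle_group G A \<gamma>)"
    using relative_gamma_closed[OF rg] subgroup.m_closed[OF A(1)] by (simp add: circle_group_def)
next
  show "\<one>\<^bsub>circle_group G A \<gamma>\<^esub> \<in> carrier (circle_group G A \<gamma>)"
    using subgroup.one_closed[OF A(1)] by (simp add: circle_group_def)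
next
  fix x
  assume "x \<in> carrier (circle_group G A \<gamma>)"
  then have x: "x \<in> A" by (simp add: circle_group_def)
  then show "\<one>\<^bsub>circle_group G A \<gamma>\<^esub> \<otimes>\<^bsub>circle_group G A \<gamma>\<^esub> x = x"
    using auto_one[OF relative_gamma_auto[OF rg x]] subgroup.subset[OF A(1)]
    by (auto simp: circle_group_def)
  have "inv x \<in> \<gamma> x ` A"
    using relative_gamma_image[OF rg A x] subgroup.m_inv_closed[OF A(1) x] by simp
  then obtain y where y: "y \<in> A" "\<gamma> x y = inv x" by (metis imageE)
  have "\<gamma> x y \<otimes> x = \<one>" using y(2) x subgroup.subset[OF A(1)] by auto
  with y(1) show "\<exists>y\<in>carrier (circle_group G A \<gamma>). y \<otimes>\<^bsub>circle_group G A \<gamma>\<^esub> x = \<one>\<^bsub>circle_group G A \<gamma>\<^esub>"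
    by (auto simp: circle_group_def)
qed

lemma circ_power_closed:
  assumes "\<eta> ` A \<subseteq> A" and "subgroup A G" and "a \<in> A"
  shows "circ_power G \<eta> a m \<in> A"
  using assms by (induction m) (auto simp: subgroup.one_closed subgroup.m_closed)

lemma relative_gamma_circ_power:
  assumes rg: "relative_gamma G A \<gamma>" and A: "subgroup A G" and a: "a \<in> A"
  shows "\<gamma> (circ_power G (\<gamma> a) a m) = \<gamma> a [^]\<^bsub>AutoGroup G\<^esub> m"
proof (induction m)
  case 0
  then show ?case using relative_gamma_one[OF rg A] by simp
next
  case (Suc m)
  interpret Aut: group "AutoGroup G" by (rule AutoGroup)
  have "circ_power G (\<gamma> a) a m \<in> A"
    using circ_power_closed A a relative_gamma_closed[OF rg _ a] by blast
  then have "\<gamma> (circ_power G (\<gamma> a) a (Suc m)) = \<gamma> a \<otimes>\<^bsub>AutoGroup G\<^esub> \<gamma> a [^]\<^bsub>AutoGroup G\<^esub> m"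
    using relative_gamma_mult[OF rg _ a] Suc by simp
  also have "\<dots> = \<gamma> a [^]\<^bsub>AutoGroup G\<^esub> Suc m"
    using Aut.nat_pow_Suc2 relative_gamma_auto[OF rg a] carrier_AutoGroup by simp
  finally show ?case .
qed

lemma relative_gamma_pow_card:
  assumes rg: "relative_gamma G A \<gamma>" and A: "subgroup A G" "finite A" and a: "a \<in> A"
  shows "\<gamma> a [^]\<^bsub>AutoGroup G\<^esub> card A = \<one>\<^bsub>AutoGroup G\<^esub>"
proof -
  interpret C: group "circle_group G A \<gamma>" using group_circle_group[OF rg A] .
  have carrier: "carrier (circle_group G A \<gamma>) = A" and one: "\<one>\<^bsub>circle_group G A \<gamma>\<^esub> = \<one>"
    by (simp_all add: circle_group_def)
  have "a [^]\<^bsub>circle_group G A \<gamma>\<^esub> card A = \<one>\<^bsub>circle_group G A \<gamma>\<^esub>"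
    using C.pow_order_eq_1[of a] a A(2) by (simp add: carrier order_def)
  then have "circ_power G (\<gamma> a) a (card A) = \<one>"
    by (simp add: circle_group_nat_pow one)
  then show ?thesis
    using relative_gamma_circ_power[OF rg A(1) a] relative_gamma_one[OF rg A(1)] by metis
qed

lemma relative_gamma_necessary:
  assumes rg: "relative_gamma G A \<gamma>" and A: "subgroup A G" "finite A" and a: "a \<in> A"
  shows "\<gamma> a ` A \<subseteq> A \<and> group.ord (AutoGroup G) (\<gamma> a) dvd card A"
proof
  show "\<gamma> a ` A \<subseteq> A" using relative_gamma_closed[OF rg _ a] by blast
  interpret Aut: group "AutoGroup G" by (rule AutoGroup)
  show "Aut.ord (\<gamma> a) dvd card A"
    using relative_gamma_pow_card[OF assms] Aut.pow_eq_id relative_gamma_auto[OF rg a]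
      carrier_AutoGroup by simp
qed

lemma circ_power_add:
  assumes \<eta>: "\<eta> \<in> auto G" and a: "a \<in> carrier G"
  shows "circ_power G \<eta> a (i + j) =
    (\<eta> [^]\<^bsub>AutoGroup G\<^esub> j) (circ_power G \<eta> a i) \<otimes> circ_power G \<eta> a j"
proof -
  have closed: "circ_power G \<eta> a k \<in> carrier G" for k
    using circ_power_closed[OF _ subgroup_self a] auto_closed[OF \<eta>] by auto
  show ?thesis
  proof (induction j)
    case 0
    then show ?case using closed AutoGroup_one_apply by simp
  next
    case (Suc j)
    have "(\<eta> [^]\<^bsub>AutoGroup G\<^esub> j) (circ_power G \<eta> a i) \<in> carrier G"
      using AutoGroup_nat_pow_closed[OF \<eta> _ _ closed] auto_closed[OF \<eta>] by auto
    then show ?case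
      using Suc auto_mult[OF \<eta>] auto_closed[OF \<eta>] closed AutoGroup_nat_pow_Suc_apply[OF \<eta> closed] a
      by (simp add: m_assoc)
  qed
qed

lemma circ_power_eq_pow_geom_sum:
  fixes s :: nat
  assumes "\<eta> \<in> auto G" and "a \<in> carrier G" and "\<eta> a = a [^] s"
  shows "circ_power G \<eta> a m = a [^] geom_sum s m"
proof (induction m)
  case 0
  then show ?case by (simp add: geom_sum_def)
next
  case (Suc m)
  then show ?case
    using assms auto_nat_pow[OF assms(1,2)] by (simp add: nat_pow_pow nat_pow_mult geom_sum_Suc)
qed

lemma AutoGroup_nat_pow_apply_generator:
  fixes s :: nat
  assumes "\<eta> \<in> auto G" and "a \<in> carrier G" and "\<eta> a = a [^] s"
  shows "(\<eta> [^]\<^bsub>AutoGroup G\<^esub> j) a = a [^] (s ^ j)"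
proof (induction j)
  case 0
  then show ?case using assms AutoGroup_one_apply by simp
next
  case (Suc j)
  then show ?case
    using assms AutoGroup_nat_pow_Suc_apply auto_nat_pow[OF assms(1,2)] by (simp add: nat_pow_pow)
qed

end

section \<open>Cyclic subgroups of odd prime power order\<close>

locale odd_prime_power_cyclic = group G for G (structure) +
  fixes p n :: nat and a :: 'a
  assumes prime_p: "Factorial_Ring.prime p" and odd_p: "odd p"
    and a_closed: "a \<in> carrier G" and ord_a: "ord a = p ^ n"
begin

lemma generate_eq_range_pow: "generate G {a} = range (\<lambda>k::nat. a [^] k)"
  using generate_pow_nat[OF a_closed] ord_a prime_p by (auto simp: prime_gt_0_nat)

lemma card_generate: "card (generate G {a}) = p ^ n"
  using generate_pow_card[OF a_closed] ord_a by simp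

lemma finite_generate: "finite (generate G {a})"
  using card_generate prime_p by (intro card_ge_0_finite) (simp add: prime_gt_0_nat)

lemma subgroup_generate: "subgroup (generate G {a}) G"
  using a_closed by (intro generate_is_subgroup) simp

lemma generator_in_generate: "a \<in> generate G {a}"
  by (rule generate.incl) simp

lemma auto_exponent_cong_one:
  assumes \<eta>: "\<eta> \<in> auto G" and invariant: "\<eta> ` generate G {a} \<subseteq> generate G {a}"
    and ord_\<eta>: "group.ord (AutoGroup G) \<eta> dvd p ^ n"
  obtains s :: nat where "\<eta> a = a [^] s" and "[s = 1] (mod p)"
proof (cases "n = 0")
  case True
  then have "a = \<one>" using ord_a a_closed ord_eq_1 by simp
  then show ?thesis using that[of 1] auto_one[OF \<eta>] by simp
next
  case False
  interpret Aut: group "AutoGroup G" by (rule AutoGroup)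
  obtain s :: nat where s: "\<eta> a = a [^] s"
    using invariant generator_in_generate generate_eq_range_pow by blast
  have "\<eta> [^]\<^bsub>AutoGroup G\<^esub> p ^ n = \<one>\<^bsub>AutoGroup G\<^esub>"
    using Aut.pow_eq_id \<eta> ord_\<eta> carrier_AutoGroup by simp
  then have "a [^] (1::nat) = a [^] s ^ p ^ n"
    using AutoGroup_nat_pow_apply_generator[OF \<eta> a_closed s, of "p ^ n"] AutoGroup_one_apply a_closed
    by simp
  then have "[1 = s ^ p ^ n] (mod p ^ n)"
    using nat_pow_eq_iff_cong[OF a_closed, of 1 "s ^ p ^ n"] ord_a by simp
  then have "[1 = s ^ p ^ n] (mod p)"
    using False by (elim cong_dvd_modulus_nat) simp
  then have "[s = 1] (mod p)"
    using fermat_little_prime_power[OF prime_p, of s] by (meson cong_sym cong_trans)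
  with s that show ?thesis by blast
qed

lemma circ_power_eq_imp_cong:
  assumes "\<eta> \<in> auto G" and "\<eta> a = a [^] s" and "[s = 1] (mod p)"
    and "circ_power G \<eta> a i = circ_power G \<eta> a j"
  shows "[i = j] (mod p ^ n)"
proof -
  have "[geom_sum s i = geom_sum s j] (mod p ^ n)"
    using assms(4) circ_power_eq_pow_geom_sum[OF assms(1) a_closed assms(2)]
      nat_pow_eq_iff_cong[OF a_closed] ord_a by simp
  then show ?thesis using geom_sum_cong_imp_cong[OF prime_p odd_p assms(3)] by blast
qed

lemma circ_power_image:
  assumes "\<eta> \<in> auto G" and "\<eta> a = a [^] s" and "[s = 1] (mod p)"
  shows "circ_power G \<eta> a ` {..<p ^ n} = generate G {a}"
proof (rule card_subset_eq[OF finite_generate])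
  show "circ_power G \<eta> a ` {..<p ^ n} \<subseteq> generate G {a}"
    using circ_power_eq_pow_geom_sum[OF assms(1) a_closed assms(2)] generate_eq_range_pow by auto
  have "inj_on (circ_power G \<eta> a) {..<p ^ n}"
  proof (rule inj_onI)
    fix i j
    assume "i \<in> {..<p ^ n}" and "j \<in> {..<p ^ n}"
      and "circ_power G \<eta> a i = circ_power G \<eta> a j"
    then show "i = j"
      using cong_less_modulus_unique_nat circ_power_eq_imp_cong[OF assms] by blast
  qed
  then show "card (circ_power G \<eta> a ` {..<p ^ n}) = card (generate G {a})"
    by (simp add: card_image card_generate)
qed

lemma relative_gamma_unique:
  assumes \<gamma>\<^sub>1: "relative_gamma G (generate G {a}) \<gamma>\<^sub>1" and \<gamma>\<^sub>2: "relative_gamma G (generate G {a}) \<gamma>\<^sub>2"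
    and eq: "\<gamma>\<^sub>1 a = \<gamma>\<^sub>2 a" and g: "g \<in> generate G {a}"
  shows "\<gamma>\<^sub>1 g = \<gamma>\<^sub>2 g"
proof -
  have aut: "\<gamma>\<^sub>1 a \<in> auto G" using relative_gamma_auto[OF \<gamma>\<^sub>1 generator_in_generate] .
  have invariant: "\<gamma>\<^sub>1 a ` generate G {a} \<subseteq> generate G {a}"
    and ord: "group.ord (AutoGroup G) (\<gamma>\<^sub>1 a) dvd p ^ n"
    using relative_gamma_necessary[OF \<gamma>\<^sub>1 subgroup_generate finite_generate generator_in_generate]
      card_generate by simp_all
  obtain s where "\<gamma>\<^sub>1 a a = a [^] s" "[s = 1] (mod p)"
    using auto_exponent_cong_one[OF aut invariant ord] by blast
  then obtain m where m: "g = circ_power G (\<gamma>\<^sub>1 a) a m"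
    using circ_power_image[OF aut] g by blast
  have "\<gamma>\<^sub>1 g = \<gamma>\<^sub>1 a [^]\<^bsub>AutoGroup G\<^esub> m"
    using relative_gamma_circ_power[OF \<gamma>\<^sub>1 subgroup_generate generator_in_generate] m by simp
  also have "\<dots> = \<gamma>\<^sub>2 g"
    using relative_gamma_circ_power[OF \<gamma>\<^sub>2 subgroup_generate generator_in_generate, of m,
        folded eq] m by simp
  finally show ?thesis .
qed

lemma relative_gamma_exists:
  assumes \<eta>: "\<eta> \<in> auto G" and invariant: "\<eta> ` generate G {a} \<subseteq> generate G {a}"
    and ord_\<eta>: "group.ord (AutoGroup G) \<eta> dvd p ^ n"
  shows "\<exists>\<gamma>. relative_gamma G (generate G {a}) \<gamma> \<and> \<gamma> a = \<eta>"
proof -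
  interpret Aut: group "AutoGroup G" by (rule AutoGroup)
  have \<eta>_carrier: "\<eta> \<in> carrier (AutoGroup G)" using \<eta> carrier_AutoGroup by simp
  obtain s where s: "\<eta> a = a [^] s" "[s = 1] (mod p)"
    using auto_exponent_cong_one[OF assms] by blast
  define \<gamma> where "\<gamma> g = \<eta> [^]\<^bsub>AutoGroup G\<^esub> (SOME m. circ_power G \<eta> a m = g)" for g
  have \<gamma>_circ_power: "\<gamma> (circ_power G \<eta> a m) = \<eta> [^]\<^bsub>AutoGroup G\<^esub> m" for m
  proof -
    define m' where "m' = (SOME m'. circ_power G \<eta> a m' = circ_power G \<eta> a m)"
    have "circ_power G \<eta> a m' = circ_power G \<eta> a m"
      unfolding m'_def by (rule someI) (rule refl)
    then have "[m' = m] (mod Aut.ord \<eta>)"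
      using circ_power_eq_imp_cong[OF \<eta> s] ord_\<eta> cong_dvd_modulus_nat by blast
    then show ?thesis
      using Aut.nat_pow_eq_iff_cong[OF \<eta>_carrier] unfolding \<gamma>_def m'_def by simp
  qed
  have onto: "\<exists>m. g = circ_power G \<eta> a m" if "g \<in> generate G {a}" for g
    using circ_power_image[OF \<eta> s] that by blast
  have "relative_gamma G (generate G {a}) \<gamma>"
    unfolding relative_gamma_def
  proof (intro conjI ballI)
    fix g
    show "\<gamma> g \<in> auto G" using Aut.nat_pow_closed[OF \<eta>_carrier] carrier_AutoGroup by (simp add: \<gamma>_def)
  next
    fix g h assume "g \<in> generate G {a}" "h \<in> generate G {a}"
    then obtain i j where i: "g = circ_power G \<eta> a i" and j: "h = circ_power G \<eta> a j"
      using onto by blast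
    have "\<gamma> (\<gamma> h g \<otimes> h) = \<gamma> (circ_power G \<eta> a (i + j))"
      using circ_power_add[OF \<eta> a_closed] i j \<gamma>_circ_power by simp
    also have "\<dots> = \<gamma> h \<otimes>\<^bsub>AutoGroup G\<^esub> \<gamma> g"
      using \<gamma>_circ_power i j Aut.nat_pow_mult[OF \<eta>_carrier] by (simp add: add.commute)
    finally show "\<gamma> (\<gamma> h g \<otimes> h) = \<gamma> h \<otimes>\<^bsub>AutoGroup G\<^esub> \<gamma> g" .
  next
    fix x y assume x: "x \<in> generate G {a}" and "y \<in> generate G {a}"
    then obtain j where "y = circ_power G \<eta> a j" using onto by blast
    then show "\<gamma> y x \<in> generate G {a}"
      using AutoGroup_nat_pow_closed[OF \<eta> invariant subgroup.subset[OF subgroup_generate] x]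
        \<gamma>_circ_power by simp
  qed
  moreover have "circ_power G \<eta> a 1 = a"
    using auto_one[OF \<eta>] a_closed by simp
  then have "\<gamma> a = \<eta>"
    using \<gamma>_circ_power[of 1] Aut.nat_pow_eone[OF \<eta>_carrier] by metis
  ultimately show ?thesis by blast
qed

end

theorem mainTheorem9:
  fixes G (structure) and p n :: nat and a :: 'a and \<eta> :: "'a \<Rightarrow> 'a"
  assumes "group G" and "finite (carrier G)"
    and "Factorial_Ring.prime p" and "odd p"
    and "a \<in> carrier G" and "group.ord G a = p ^ n"
    and "\<eta> \<in> auto G"
  shows "((\<exists>\<gamma>. relative_gamma G (generate G {a}) \<gamma> \<and> \<gamma> a = \<eta>) \<longleftrightarrow>
           (\<eta> ` generate G {a} \<subseteq> generate G {a} \<and>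
            group.ord (AutoGroup G) \<eta> dvd p ^ n))
      \<and> (\<forall>\<gamma>1 \<gamma>2. relative_gamma G (generate G {a}) \<gamma>1 \<and> \<gamma>1 a = \<eta> \<and>
                 relative_gamma G (generate G {a}) \<gamma>2 \<and> \<gamma>2 a = \<eta> \<longrightarrow>
                 (\<forall>g\<in>generate G {a}. \<gamma>1 g = \<gamma>2 g))"
proof -
  interpret odd_prime_power_cyclic G p n a
    using assms by (simp add: odd_prime_power_cyclic_def odd_prime_power_cyclic_axioms_def)
  have necessary: "\<eta> ` generate G {a} \<subseteq> generate G {a} \<and> group.ord (AutoGroup G) \<eta> dvd p ^ n"
    if "relative_gamma G (generate G {a}) \<gamma>" and "\<gamma> a = \<eta>" for \<gamma>
    using relative_gamma_necessary[OF that(1) subgroup_generate finite_generate generator_in_generate]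
      that(2) card_generate by simp
  show ?thesis
  proof (intro conjI)
    show "(\<exists>\<gamma>. relative_gamma G (generate G {a}) \<gamma> \<and> \<gamma> a = \<eta>) \<longleftrightarrow>
        (\<eta> ` generate G {a} \<subseteq> generate G {a} \<and> group.ord (AutoGroup G) \<eta> dvd p ^ n)"
      using necessary relative_gamma_exists[OF assms(7)] by blast
    show "\<forall>\<gamma>1 \<gamma>2. relative_gamma G (generate G {a}) \<gamma>1 \<and> \<gamma>1 a = \<eta> \<and>
        relative_gamma G (generate G {a}) \<gamma>2 \<and> \<gamma>2 a = \<eta> \<longrightarrow> (\<forall>g\<in>generate G {a}. \<gamma>1 g = \<gamma>2 g)"
      using relative_gamma_unique by (simp (no_asm_simp))
  qed
qed

end
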